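(* Let $n \ge 1$ and $K \ge 1$ be integers and let $M_0, M_1, \dots, M_{K-1}$ be $n \times n$ real matrices with nonnegative entries. For real $\tau > 0$ define $$M(\tau) = (M_0 + \tau I)(M_1 + \tau I)\cdots(M_{K-1} + \tau I),$$ where $I$ is the $n\times n$ identity matrix, and assume that $M(\tau)$ is irreducible and aperiodic (primitive) for every $\tau > 0$. For $\tau>0$ let $v(\tau) \in [0,1]^n$ denote the principal (Perron) eigenvector of $M(\tau)$, i.e. the unique eigenvector of $M(\tau)$ for its spectral radius whose entries are nonnegative and sum to $1$. Then the map $(0,\infty) \ni \tau \mapsto v(\tau) \in [0,1]^n$ (which is real-analytic) extends continuously to $\tau = 0$; that is, the limit $\lim_{\tau \to 0^+} v(\tau)$ exists.
   Context: An $n\times n$ nonnegative matrix is irreducible if its associated directed graph (edge $i\to j$ iff entry $(i,j)>0$) is strongly connected, and aperiodic if in addition the gcd of the lengths of its cycles is $1$. By Perron–Frobenius theory such a matrix has a simple positive real eigenvalue equal to its spectral radius, with an eigenvector having positive entries, unique up to scaling. Note that the unperturbed product $M_0M_1\cdots M_{K-1}$ itself need not be irreducible or aperiodic (it may even be the zero matrix). *)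

theory Defs
  imports "HOL-Analysis.Analysis"
begin

definition nonneg_mat :: "real^'n^'n \<Rightarrow> bool" where
  "nonneg_mat A \<longleftrightarrow> (\<forall>i j. A $ i $ j \<ge> 0)"

definition mat_graph :: "real^'n^'n \<Rightarrow> ('n \<times> 'n) set" where
  "mat_graph A = {(i, j). A $ i $ j > 0}"

definition irreducible_mat :: "real^'n^'n \<Rightarrow> bool" where
  "irreducible_mat A \<longleftrightarrow> nonneg_mat A \<and> (\<forall>i j. (i, j) \<in> (mat_graph A)\<^sup>*)"

definition cycle_lengths :: "real^'n^'n \<Rightarrow> nat set" where
  "cycle_lengths A = {k. k > 0 \<and> (\<exists>i. (i, i) \<in> mat_graph A ^^ k)}"

definition aperiodic_mat :: "real^'n^'n \<Rightarrow> bool" where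
  "aperiodic_mat A \<longleftrightarrow> irreducible_mat A \<and> Gcd (cycle_lengths A) = 1"

definition cmat :: "real^'n^'n \<Rightarrow> complex^'n^'n" where
  "cmat A = (\<chi> i j. complex_of_real (A $ i $ j))"

definition eigenvalues_mat :: "real^'n^'n \<Rightarrow> complex set" where
  "eigenvalues_mat A = {c. \<exists>x::complex^'n. x \<noteq> 0 \<and> cmat A *v x = c *s x}"

definition spectral_radius_mat :: "real^'n^'n \<Rightarrow> real" where
  "spectral_radius_mat A = Max (cmod ` eigenvalues_mat A)"

definition perron_vec :: "real^'n^'n \<Rightarrow> real^'n" where
  "perron_vec A = (THE v. (\<forall>i. v $ i \<ge> 0) \<and> (\<Sum>i\<in>UNIV. v $ i) = 1 \<and>
                      A *v v = spectral_radius_mat A *\<^sub>R v)"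

definition shifted_prod :: "(nat \<Rightarrow> real^'n^'n) \<Rightarrow> nat \<Rightarrow> real \<Rightarrow> real^'n^'n" where
  "shifted_prod M K \<tau> = foldr (\<lambda>k P. (M k + \<tau> *\<^sub>R mat 1) ** P) [0..<K] (mat 1)"

end

theory Submission
  imports Defs "HOL-Computational_Algebra.Polynomial_Factorial" "HOL-Computational_Algebra.Field_as_Ring"
begin

text \<open>
  Since \<open>M(\<tau>)\<close> is irreducible with positive diagonal, Perron--Frobenius theory applies; the
  Perron vector is obtained from Brouwer's fixed point theorem on the probability simplex.
  The Perron vector \<open>v(\<tau>)\<close> is continuous on \<open>(0, \<infinity>)\<close> because its graph is closed and
  lies in a compact set. Each coordinate is algebraic in \<open>\<tau>\<close>: the entries of \<open>M(\<tau>)\<close> are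
  polynomials, the Perron root \<open>\<rho>(\<tau>)\<close> is a root of \<open>det (x I - M(\<tau>))\<close>, and since \<open>v(\<tau>)\<close>
  spans the kernel of \<open>\<rho>(\<tau>) I - M(\<tau>)\<close>, \<open>v\<^sub>k(\<tau>) = c\<close> exactly when adding the rank-one matrix
  with all rows \<open>e\<^sub>k - c 1\<close> keeps \<open>\<rho>(\<tau>) I - M(\<tau>)\<close> singular. Splitting the characteristic
  polynomial in \<open>\<real>[\<tau>][x]\<close> into prime factors shows that all but finitely many levels \<open>c\<close> are
  attained only finitely often by \<open>v\<^sub>k\<close>. A bounded continuous function on \<open>(0, \<infinity>)\<close> with
  this property has a limit at \<open>0\<close>, since otherwise it would oscillate across infinitely many
  levels infinitely often.
\<close>

definition prob_simplex :: "(real^'n) set" where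
  "prob_simplex = {x. (\<forall>i. 0 \<le> x $ i) \<and> (\<Sum>i\<in>UNIV. x $ i) = 1}"

lemma compact_prob_simplex: "compact prob_simplex"
  unfolding compact_eq_bounded_closed
proof
  show "bounded (prob_simplex :: (real^'n) set)"
  proof (rule boundedI)
    fix x :: "real^'n"
    assume "x \<in> prob_simplex"
    then have "(\<Sum>i\<in>UNIV. \<bar>x $ i\<bar>) = 1"
      by (simp add: prob_simplex_def)
    then show "norm x \<le> 1"
      using norm_le_l1_cart[of x] by simp
  qed
  have "prob_simplex = (\<Inter>i. {x::real^'n. 0 \<le> x $ i}) \<inter> {x. (\<Sum>i\<in>UNIV. x $ i) = 1}"
    by (auto simp: prob_simplex_def)
  also have "closed \<dots>"
    by (intro closed_Int closed_INT closed_Collect_eq continuous_intros ballI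
        closed_Collect_le[OF continuous_on_const continuous_on_component[OF continuous_on_id]])
  finally show "closed (prob_simplex :: (real^'n) set)" .
qed

lemma convex_prob_simplex: "convex prob_simplex"
proof (rule convexI)
  fix x y :: "real^'n" and u v :: real
  assume "x \<in> prob_simplex" "y \<in> prob_simplex" "0 \<le> u" "0 \<le> v" "u + v = 1"
  then show "u *\<^sub>R x + v *\<^sub>R y \<in> prob_simplex"
    by (simp add: prob_simplex_def sum.distrib flip: sum_distrib_left)
qed

lemma prob_simplex_nonempty: "prob_simplex \<noteq> {}"
proof -
  have "(\<chi> i. 1 / real CARD('n)) \<in> (prob_simplex :: (real^'n) set)"
    by (simp add: prob_simplex_def)
  then show ?thesis by blast
qed

lemma prob_simplex_nonzero: "x \<in> prob_simplex \<Longrightarrow> x \<noteq> 0"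
  by (auto simp: prob_simplex_def)

lemma prob_simplex_abs_component_le_1:
  assumes "x \<in> prob_simplex"
  shows "\<bar>x $ i\<bar> \<le> 1"
proof -
  have "0 \<le> x $ i"
    using assms by (simp add: prob_simplex_def)
  have "x $ i \<le> (\<Sum>j\<in>UNIV. x $ j)"
    using assms unfolding prob_simplex_def by (intro member_le_sum) auto
  moreover have "(\<Sum>j\<in>UNIV. x $ j) = 1"
    using assms by (simp add: prob_simplex_def)
  ultimately show ?thesis
    using \<open>0 \<le> x $ i\<close> by simp
qed

lemma eigenvalue_eq_sum_if_prob_simplex:
  fixes A :: "real^'n^'n"
  assumes "u \<in> prob_simplex" "A *v u = \<mu> *\<^sub>R u"
  shows "(\<Sum>k\<in>UNIV. (A *v u) $ k) = \<mu>"
  using assms by (simp add: prob_simplex_def flip: sum_distrib_left)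

lemma det_map_hom:
  fixes h :: "'a::comm_ring_1 \<Rightarrow> 'b::comm_ring_1" and X :: "'a^'n^'n"
  assumes add: "\<And>x y. h (x + y) = h x + h y" and mult: "\<And>x y. h (x * y) = h x * h y"
    and one: "h 1 = 1"
  shows "det (\<chi> i j. h (X $ i $ j)) = h (det X)"
proof -
  have zero: "h 0 = 0"
    using add[of 0 0] by simp
  have uminus: "h (- x) = - h x" for x
    using add[of x "- x"] zero by (simp add: eq_neg_iff_add_eq_0 add.commute)
  have prod: "h (prod f S) = (\<Prod>x\<in>S. h (f x))" for f :: "'n \<Rightarrow> 'a" and S
    by (induction S rule: infinite_finite_induct) (simp_all add: mult one)
  have sign: "h (of_int (sign p) * y) = of_int (sign p) * h y" for p :: "'n \<Rightarrow> 'n" and y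
    by (cases "sign p = 1") (auto simp: sign_def uminus one mult)
  show ?thesis
    unfolding det_def
    by (simp add: sum_comp_morphism[of h, OF zero add, symmetric] o_def sign prod)
qed

lemma det_eq_0_iff_nontrivial_kernel:
  fixes X :: "'a::field^'n^'n"
  shows "det X = 0 \<longleftrightarrow> (\<exists>x. x \<noteq> 0 \<and> X *v x = 0)"
proof -
  have "det X = 0 \<longleftrightarrow> \<not> inj ((*v) X)"
    using det_nz_iff_inj_gen[of "(*v) X"] by auto
  also have "\<dots> \<longleftrightarrow> (\<exists>x. x \<noteq> 0 \<and> X *v x = 0)"
    unfolding inj_def
    by (metis eq_iff_diff_eq_0 matrix_vector_mult_0_right matrix_vector_mult_diff_distrib)
  finally show ?thesis .
qed

lemma mat_mult_vector: "mat c *v x = c *s x"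
proof -
  have "(mat c *v x) $ i = (\<Sum>j\<in>UNIV. if i = j then c * x $ j else 0)" for i
  proof -
    have "(mat c *v x) $ i = (\<Sum>j\<in>UNIV. (if i = j then c else 0) * x $ j)"
      by (simp add: matrix_vector_mult_def mat_def)
    also have "\<dots> = (\<Sum>j\<in>UNIV. if i = j then c * x $ j else 0)"
      by (rule sum.cong) auto
    finally show ?thesis .
  qed
  then show ?thesis
    by (simp add: vec_eq_iff)
qed

lemma inner_pos_if_pos_nonneg:
  fixes w u :: "real^'n"
  assumes "\<And>i. 0 < w $ i" "\<And>i. 0 \<le> u $ i" "u \<noteq> 0"
  shows "0 < inner w u"
proof -
  obtain k where "u $ k \<noteq> 0"
    using assms(3) by (metis vec_eq_iff zero_index)
  then have "0 < w $ k * u $ k"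
    using assms(1,2)[of k] by simp
  also have "\<dots> \<le> inner w u"
    unfolding inner_vec_def inner_real_def using assms(1,2)
    by (intro member_le_sum[where f = "\<lambda>i. w $ i * u $ i"]) (auto intro: mult_nonneg_nonneg[OF less_imp_le])
  finally show ?thesis .
qed

lemma eigenvalue_eq_if_inner_nonzero:
  fixes A :: "real^'n^'n"
  assumes "w v* A = l *\<^sub>R w" "A *v u = \<mu> *\<^sub>R u" "inner w u \<noteq> 0"
  shows "\<mu> = l"
proof -
  have "l * inner w u = inner (w v* A) u"
    using assms(1) by simp
  also have "\<dots> = \<mu> * inner w u"
    using assms(2) by (simp add: dot_lmul_matrix)
  finally show ?thesis
    using assms(3) by simp
qed

lemma eigenvalues_mat_iff_det:
  "c \<in> eigenvalues_mat A \<longleftrightarrow> det (mat c - cmat A) = 0"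
proof -
  have "cmat A *v x = c *s x \<longleftrightarrow> (mat c - cmat A) *v x = 0" for x
    by (simp add: matrix_vector_mult_diff_rdistrib mat_mult_vector eq_commute[of "c *s x"])
  then show ?thesis
    by (simp add: eigenvalues_mat_def det_eq_0_iff_nontrivial_kernel)
qed

lemma finite_eigenvalues_mat:
  fixes A :: "real^'n^'n"
  assumes "c \<notin> eigenvalues_mat A"
  shows "finite (eigenvalues_mat A)"
proof -
  define P :: "complex poly^'n^'n" where "P = mat [:0, 1:] - (\<chi> i j. [:cmat A $ i $ j:])"
  define p where "p = det P"
  have poly_p: "poly p z = det (mat z - cmat A)" for z
  proof -
    have "poly p z = det (\<chi> i j. poly (P $ i $ j) z)"
      unfolding p_def by (rule det_map_hom[symmetric]) simp_all
    also have "(\<chi> i j. poly (P $ i $ j) z) = mat z - cmat A"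
      by (simp add: vec_eq_iff mat_def P_def)
    finally show ?thesis .
  qed
  have "p \<noteq> 0"
    using assms poly_p[of c] by (auto simp: eigenvalues_mat_iff_det)
  moreover have "eigenvalues_mat A = {z. poly p z = 0}"
    by (auto simp: poly_p eigenvalues_mat_iff_det)
  ultimately show ?thesis
    by (simp add: poly_roots_finite)
qed

lemma of_real_mem_eigenvalues_mat:
  fixes A :: "real^'n^'n"
  assumes "x \<noteq> 0" "A *v x = r *\<^sub>R x"
  shows "complex_of_real r \<in> eigenvalues_mat A"
proof -
  define z :: "complex^'n" where "z = (\<chi> i. complex_of_real (x $ i))"
  have "z \<noteq> 0"
    using assms(1) by (auto simp: z_def vec_eq_iff)
  have "(cmat A *v z) $ i = complex_of_real ((A *v x) $ i)" for i
    by (simp add: matrix_vector_mult_def cmat_def z_def)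
  then have "cmat A *v z = complex_of_real r *s z"
    using assms(2) by (simp add: vec_eq_iff z_def)
  with \<open>z \<noteq> 0\<close> show ?thesis
    by (auto simp: eigenvalues_mat_def)
qed

section \<open>Perron--Frobenius theory for irreducible matrices with positive diagonal\<close>

locale perron_frobenius =
  fixes A :: "real^'n^'n"
  assumes irreducible: "irreducible_mat A"
    and diag_pos: "\<And>i. 0 < A $ i $ i"
begin

lemma nonneg: "0 \<le> A $ i $ j"
  using irreducible by (simp add: irreducible_mat_def nonneg_mat_def)

lemma mult_vector_ge_entry:
  assumes "\<And>j. 0 \<le> y $ j"
  shows "A $ i $ k * y $ k \<le> (A *v y) $ i"
  unfolding matrix_vector_mult_def using assms nonneg
  by (simp, intro member_le_sum[where f = "\<lambda>j. A $ i $ j * y $ j"]) auto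

lemma mult_vector_nonneg:
  assumes "\<And>j. 0 \<le> y $ j"
  shows "0 \<le> (A *v y) $ i"
  unfolding matrix_vector_mult_def using assms nonneg by (simp add: sum_nonneg)

text \<open>Irreducibility spreads positivity of one entry of a nonnegative eigenvector along
  the paths of the graph of \<open>A\<close>.\<close>
lemma nonneg_eigenvector_pos:
  assumes nonneg_y: "\<And>j. 0 \<le> y $ j" and eigen: "A *v y = \<mu> *\<^sub>R y" and pos: "0 < y $ j"
  shows "0 < y $ i"
proof -
  have "(i, j) \<in> (mat_graph A)\<^sup>*"
    using irreducible by (simp add: irreducible_mat_def)
  then show ?thesis
  proof (induction rule: converse_rtrancl_induct)
    case base
    show ?case using pos .
  next
    case (step i k)
    then have "0 < A $ i $ k * y $ k"
      by (simp add: mat_graph_def)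
    also have "\<dots> \<le> (A *v y) $ i"
      by (rule mult_vector_ge_entry[OF nonneg_y])
    finally have "0 < \<mu> * y $ i"
      using eigen by simp
    then show ?case
      using nonneg_y[of i] by (cases "y $ i = 0") auto
  qed
qed

lemma sum_mult_vector_pos:
  assumes x: "x \<in> prob_simplex"
  shows "0 < (\<Sum>i\<in>UNIV. (A *v x) $ i)"
proof -
  have nonneg_x: "\<And>j. 0 \<le> x $ j"
    using x by (simp add: prob_simplex_def)
  obtain k where "x $ k \<noteq> 0"
    using prob_simplex_nonzero[OF x] by (metis vec_eq_iff zero_index)
  then have "0 < A $ k $ k * x $ k"
    using diag_pos[of k] nonneg_x[of k] by simp
  also have "\<dots> \<le> (A *v x) $ k"
    by (rule mult_vector_ge_entry[OF nonneg_x])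
  also have "\<dots> \<le> (\<Sum>i\<in>UNIV. (A *v x) $ i)"
    by (rule member_le_sum) (auto intro: mult_vector_nonneg[OF nonneg_x])
  finally show ?thesis .
qed

lemma ex_pos_eigenvector:
  "\<exists>v l. v \<in> prob_simplex \<and> (\<forall>i. 0 < v $ i) \<and> A *v v = l *\<^sub>R v"
proof -
  define s where "s x = (\<Sum>i\<in>UNIV. (A *v x) $ i)" for x
  have s_pos: "0 < s x" if "x \<in> prob_simplex" for x
    unfolding s_def using that by (rule sum_mult_vector_pos)
  define f where "f x = inverse (s x) *\<^sub>R (A *v x)" for x
  have "continuous_on prob_simplex s"
    unfolding s_def by (intro continuous_intros)
  then have "continuous_on prob_simplex f"
    unfolding f_def by (intro continuous_intros) (use s_pos in fastforce)+
  moreover have "f \<in> prob_simplex \<rightarrow> prob_simplex"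
  proof
    fix x :: "real^'n"
    assume x: "x \<in> prob_simplex"
    then have "(\<Sum>i\<in>UNIV. f x $ i) = 1"
      using s_pos[OF x] by (simp add: f_def s_def flip: sum_distrib_left)
    moreover have "0 \<le> f x $ i" for i
      using x s_pos[OF x] by (simp add: f_def prob_simplex_def mult_vector_nonneg)
    ultimately show "f x \<in> prob_simplex"
      by (simp add: prob_simplex_def)
  qed
  ultimately obtain v where v: "v \<in> prob_simplex" "f v = v"
    using brouwer[OF compact_prob_simplex convex_prob_simplex prob_simplex_nonempty] by blast
  have eigen: "A *v v = s v *\<^sub>R v"
    using v s_pos[OF v(1)] by (metis f_def less_irrefl right_inverse scaleR_one scaleR_scaleR)
  have nonneg_v: "\<And>j. 0 \<le> v $ j"
    using v(1) by (simp add: prob_simplex_def)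
  obtain k where "v $ k \<noteq> 0"
    using prob_simplex_nonzero[OF v(1)] by (metis vec_eq_iff zero_index)
  then have "0 < v $ k"
    using nonneg_v[of k] by simp
  then have "\<forall>i. 0 < v $ i"
    using nonneg_eigenvector_pos[OF nonneg_v eigen] by blast
  with v(1) eigen show ?thesis
    by blast
qed

lemma transpose: "perron_frobenius (transpose A)"
proof
  have "mat_graph (transpose A) = (mat_graph A)\<inverse>"
    by (auto simp: mat_graph_def transpose_def)
  then show "irreducible_mat (transpose A)"
    using irreducible by (simp add: irreducible_mat_def nonneg_mat_def transpose_def rtrancl_converse)
qed (simp add: transpose_def diag_pos)

lemma ex_pos_left_eigenvector: "\<exists>w l. (\<forall>i. 0 < w $ i) \<and> w v* A = l *\<^sub>R w"
  using perron_frobenius.ex_pos_eigenvector[OF transpose] by auto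

lemma eigenvalue_pos:
  assumes v_pos: "\<And>i. 0 < v $ i" and v: "A *v v = l *\<^sub>R v"
  shows "0 < l"
proof -
  fix i :: 'n
  have "0 < A $ i $ i * v $ i"
    using diag_pos v_pos by simp
  also have "\<dots> \<le> l * v $ i"
    using mult_vector_ge_entry[of v i i] v_pos v by (simp add: less_imp_le)
  finally show ?thesis
    using v_pos[of i] by (simp add: zero_less_mult_iff)
qed

text \<open>With \<open>s\<close> the largest ratio \<open>x\<^sub>i / v\<^sub>i\<close>, \<open>s v - x\<close> is a nonnegative eigenvector with a zero
  entry, hence zero.\<close>
lemma eigenvector_multiple:
  assumes v_pos: "\<And>i. 0 < v $ i" and v: "A *v v = l *\<^sub>R v" and x: "A *v x = l *\<^sub>R x"
  shows "\<exists>s. x = s *\<^sub>R v"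
proof -
  define s where "s = Max (range (\<lambda>i. x $ i / v $ i))"
  have "s \<in> range (\<lambda>i. x $ i / v $ i)"
    unfolding s_def by (rule Max_in) auto
  then obtain k where k: "s = x $ k / v $ k"
    by blast
  define y where "y = s *\<^sub>R v - x"
  have nonneg_y: "0 \<le> y $ i" for i
    using Max_ge[of "range (\<lambda>i. x $ i / v $ i)" "x $ i / v $ i"] v_pos[of i]
    by (simp add: y_def s_def divide_le_eq mult.commute)
  have "A *v y = l *\<^sub>R y"
    by (simp add: y_def v x algebra_simps)
  have "y $ k = 0"
    using k v_pos[of k] by (simp add: y_def)
  have "y $ i = 0" for i
  proof (rule ccontr)
    assume "y $ i \<noteq> 0"
    then have "0 < y $ k"
      using nonneg_eigenvector_pos[OF nonneg_y \<open>A *v y = l *\<^sub>R y\<close>, of i k] nonneg_y[of i] by simp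
    with \<open>y $ k = 0\<close> show False
      by simp
  qed
  then have "y = 0"
    by (simp add: vec_eq_iff)
  then show ?thesis
    by (auto simp: y_def)
qed

lemma eigenvalue_norm_le:
  assumes v_pos: "\<And>i. 0 < v $ i" and v: "A *v v = l *\<^sub>R v"
    and c: "c \<in> eigenvalues_mat A"
  shows "cmod c \<le> l"
proof -
  obtain x :: "complex^'n" where x: "x \<noteq> 0" "cmat A *v x = c *s x"
    using c by (auto simp: eigenvalues_mat_def)
  define t where "t = Max (range (\<lambda>i. cmod (x $ i) / v $ i))"
  have "t \<in> range (\<lambda>i. cmod (x $ i) / v $ i)"
    unfolding t_def by (rule Max_in) auto
  then obtain k where k: "t = cmod (x $ k) / v $ k"
    by blast
  have x_le: "cmod (x $ i) \<le> t * v $ i" for i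
    using Max_ge[of "range (\<lambda>i. cmod (x $ i) / v $ i)" "cmod (x $ i) / v $ i"] v_pos[of i]
    by (simp add: t_def divide_le_eq)
  obtain j where "x $ j \<noteq> 0"
    using x(1) by (metis vec_eq_iff zero_index)
  then have "0 < cmod (x $ j) / v $ j"
    using v_pos[of j] by simp
  also have "\<dots> \<le> t"
    unfolding t_def by (rule Max_ge) auto
  finally have "0 < t * v $ k"
    using v_pos[of k] by simp
  have "cmod c * (t * v $ k) = cmod ((cmat A *v x) $ k)"
    using x(2) k v_pos[of k] by (simp add: norm_mult)
  also have "\<dots> \<le> (\<Sum>j\<in>UNIV. A $ k $ j * cmod (x $ j))"
    unfolding matrix_vector_mult_def cmat_def
    by (simp, rule order_trans[OF norm_sum]) (simp add: norm_mult nonneg)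
  also have "\<dots> \<le> (\<Sum>j\<in>UNIV. A $ k $ j * (t * v $ j))"
    by (intro sum_mono mult_left_mono x_le nonneg)
  also have "\<dots> = t * (A *v v) $ k"
    by (simp add: matrix_vector_mult_def sum_distrib_left mult_ac)
  also have "\<dots> = l * (t * v $ k)"
    by (simp add: v)
  finally show ?thesis
    using \<open>0 < t * v $ k\<close> by (rule mult_right_le_imp_le)
qed

lemma spectral_radius_eq:
  assumes v_pos: "\<And>i. 0 < v $ i" and v: "A *v v = l *\<^sub>R v"
  shows "spectral_radius_mat A = l"
  unfolding spectral_radius_mat_def
proof (rule Max_eqI)
  have "cmod (complex_of_real (\<bar>l\<bar> + 1)) > l"
    by simp
  then have "complex_of_real (\<bar>l\<bar> + 1) \<notin> eigenvalues_mat A"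
    using eigenvalue_norm_le[OF v_pos v] by force
  then show "finite (cmod ` eigenvalues_mat A)"
    using finite_eigenvalues_mat by blast
  have "v \<noteq> 0"
    using v_pos by (metis less_irrefl zero_index)
  then have "complex_of_real l \<in> eigenvalues_mat A"
    by (rule of_real_mem_eigenvalues_mat[OF _ v])
  moreover have "0 \<le> l"
    using eigenvalue_pos[OF v_pos v] by simp
  ultimately show "l \<in> cmod ` eigenvalues_mat A"
    by (metis abs_of_nonneg image_eqI norm_of_real)
qed (use eigenvalue_norm_le[OF v_pos v] in auto)

lemma nonneg_eigenvector_unique:
  assumes v: "v \<in> prob_simplex" "\<And>i. 0 < v $ i" "A *v v = l *\<^sub>R v"
    and u: "u \<in> prob_simplex" "A *v u = \<mu> *\<^sub>R u"
  shows "u = v"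
proof -
  obtain w l' where w: "\<And>i. 0 < w $ i" "w v* A = l' *\<^sub>R w"
    using ex_pos_left_eigenvector by blast
  have u_nonneg: "\<And>i. 0 \<le> u $ i"
    using u(1) by (simp add: prob_simplex_def)
  have v_nonneg: "\<And>i. 0 \<le> v $ i"
    using v(2) by (simp add: less_imp_le)
  have "l = l'"
    using eigenvalue_eq_if_inner_nonzero[OF w(2) v(3)]
      inner_pos_if_pos_nonneg[OF w(1) v_nonneg prob_simplex_nonzero[OF v(1)]] by simp
  moreover have "\<mu> = l'"
    using eigenvalue_eq_if_inner_nonzero[OF w(2) u(2)]
      inner_pos_if_pos_nonneg[OF w(1) u_nonneg prob_simplex_nonzero[OF u(1)]] by simp
  ultimately obtain s where s: "u = s *\<^sub>R v"
    using eigenvector_multiple[OF v(2,3)] u(2) by blast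
  have "1 = s * (\<Sum>i\<in>UNIV. v $ i)"
    using u(1) by (simp add: s prob_simplex_def sum_distrib_left)
  then have "s = 1"
    using v(1) by (simp add: prob_simplex_def)
  with s show ?thesis
    by simp
qed

lemma perron_vec_props:
  "perron_vec A \<in> prob_simplex \<and> (\<forall>i. 0 < perron_vec A $ i) \<and>
    A *v perron_vec A = spectral_radius_mat A *\<^sub>R perron_vec A"
proof -
  obtain v l where v: "v \<in> prob_simplex" "\<And>i. 0 < v $ i" "A *v v = l *\<^sub>R v"
    using ex_pos_eigenvector by blast
  have "perron_vec A = v"
    unfolding perron_vec_def spectral_radius_eq[OF v(2,3)]
  proof (rule the_equality)
    show "(\<forall>i. 0 \<le> v $ i) \<and> (\<Sum>i\<in>UNIV. v $ i) = 1 \<and> A *v v = l *\<^sub>R v"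
      using v by (simp add: prob_simplex_def)
  next
    fix u
    assume "(\<forall>i. 0 \<le> u $ i) \<and> (\<Sum>i\<in>UNIV. u $ i) = 1 \<and> A *v u = l *\<^sub>R u"
    then show "u = v"
      using nonneg_eigenvector_unique[OF v, of u l] by (simp add: prob_simplex_def)
  qed
  with v show ?thesis
    using spectral_radius_eq[OF v(2,3)] by simp
qed

lemma perron_vec_in_prob_simplex: "perron_vec A \<in> prob_simplex"
  and perron_vec_pos: "0 < perron_vec A $ i"
  and perron_vec_eigen: "A *v perron_vec A = spectral_radius_mat A *\<^sub>R perron_vec A"
  using perron_vec_props by auto

lemma perron_vec_eqI:
  assumes "u \<in> prob_simplex" "A *v u = \<mu> *\<^sub>R u"
  shows "perron_vec A = u"
  using nonneg_eigenvector_unique[OF perron_vec_in_prob_simplex perron_vec_pos perron_vec_eigen assms]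
  by simp

lemma ex_pos_left_eigenvector_spectral_radius:
  "\<exists>w. (\<forall>i. 0 < w $ i) \<and> w v* A = spectral_radius_mat A *\<^sub>R w"
proof -
  obtain w l where w: "\<And>i. 0 < w $ i" "w v* A = l *\<^sub>R w"
    using ex_pos_left_eigenvector by blast
  have "spectral_radius_mat A = l"
    using eigenvalue_eq_if_inner_nonzero[OF w(2) perron_vec_eigen] perron_vec_pos
      inner_pos_if_pos_nonneg[OF w(1), of "perron_vec A"]
      prob_simplex_nonzero[OF perron_vec_in_prob_simplex]
    by (simp add: less_imp_le)
  with w show ?thesis
    by blast
qed

lemma det_spectral_radius_shift: "det (mat (spectral_radius_mat A) - A) = 0"
proof -
  have "(mat (spectral_radius_mat A) - A) *v perron_vec A = 0"
    by (simp add: matrix_vector_mult_diff_rdistrib mat_mult_vector perron_vec_eigen vec_eq_iff)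
  then show ?thesis
    using prob_simplex_nonzero[OF perron_vec_in_prob_simplex] det_eq_0_iff_nontrivial_kernel by blast
qed

lemma det_shift_nonzero:
  assumes "spectral_radius_mat A < r"
  shows "det (mat r - A) \<noteq> 0"
proof
  assume "det (mat r - A) = 0"
  then obtain x where "x \<noteq> 0" "(mat r - A) *v x = 0"
    using det_eq_0_iff_nontrivial_kernel by blast
  then have "x \<noteq> 0" "A *v x = r *\<^sub>R x"
    by (simp_all add: matrix_vector_mult_diff_rdistrib mat_mult_vector vec_eq_iff)
  then have "cmod (complex_of_real r) \<le> spectral_radius_mat A"
    using of_real_mem_eigenvalues_mat eigenvalue_norm_le[OF perron_vec_pos perron_vec_eigen] by blast
  with assms show False
    by simp
qed

text \<open>Pair with a positive left eigenvector: the all-ones vector is not in the range of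
  \<open>A - \<rho> I\<close>.\<close>
lemma spectral_shift_range_const_eq_0:
  assumes Ax: "A *v x = spectral_radius_mat A *\<^sub>R x + (\<chi> i. d)"
  shows "d = 0"
proof -
  let ?\<rho> = "spectral_radius_mat A"
  obtain w where w: "\<And>i. 0 < w $ i" "w v* A = ?\<rho> *\<^sub>R w"
    using ex_pos_left_eigenvector_spectral_radius by blast
  have "?\<rho> * inner w x = inner (w v* A) x"
    using w(2) by simp
  also have "\<dots> = inner w (A *v x)"
    by (rule dot_lmul_matrix)
  also have "\<dots> = ?\<rho> * inner w x + d * (\<Sum>i\<in>UNIV. w $ i)"
    by (simp add: Ax inner_add_right) (simp add: inner_vec_def sum_distrib_left mult.commute)
  finally have "d * (\<Sum>i\<in>UNIV. w $ i) = 0"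
    by simp
  moreover have "0 < (\<Sum>i\<in>UNIV. w $ i)"
    using w(1) by (simp add: sum_pos)
  ultimately show "d = 0"
    by simp
qed

lemma det_rank_one_update_eq_0_iff:
  "det (mat (spectral_radius_mat A) - A + (\<chi> i. f)) = 0 \<longleftrightarrow> inner f (perron_vec A) = 0"
  (is "det ?B = 0 \<longleftrightarrow> _")
proof -
  let ?\<rho> = "spectral_radius_mat A" and ?v = "perron_vec A"
  have B_mult: "?B *v x = 0 \<longleftrightarrow> A *v x = ?\<rho> *\<^sub>R x + (\<chi> i. inner f x)" for x
  proof -
    have "(\<chi> i. f) *v x = (\<chi> i. inner f x)"
      by (simp add: vec_eq_iff matrix_vector_mult_def inner_vec_def)
    then have "?B *v x = ?\<rho> *s x - A *v x + (\<chi> i. inner f x)"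
      by (simp add: matrix_vector_mult_add_rdistrib matrix_vector_mult_diff_rdistrib mat_mult_vector)
    then show ?thesis
      by (simp add: vec_eq_iff) (smt (verit))
  qed
  show ?thesis
  proof
    assume "det ?B = 0"
    then obtain x where x: "x \<noteq> 0" "?B *v x = 0"
      using det_eq_0_iff_nontrivial_kernel by blast
    define d where "d = inner f x"
    have Ax: "A *v x = ?\<rho> *\<^sub>R x + (\<chi> i. d)"
      using x(2) B_mult by (simp add: d_def)
    then have "d = 0"
      by (rule spectral_shift_range_const_eq_0)
    then have "A *v x = ?\<rho> *\<^sub>R x"
      using Ax by (simp flip: zero_vec_def)
    then obtain s where s: "x = s *\<^sub>R ?v"
      using eigenvector_multiple[OF perron_vec_pos perron_vec_eigen] by blast
    with x(1) have "s \<noteq> 0"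
      by auto
    moreover have "s * inner f ?v = 0"
      using \<open>d = 0\<close> by (simp add: d_def s)
    ultimately show "inner f ?v = 0"
      by simp
  next
    assume "inner f ?v = 0"
    then have "?B *v ?v = 0"
      using B_mult perron_vec_eigen by (simp flip: zero_vec_def)
    then show "det ?B = 0"
      using prob_simplex_nonzero[OF perron_vec_in_prob_simplex] det_eq_0_iff_nontrivial_kernel by blast
  qed
qed

end

section \<open>Continuity of the Perron vector\<close>

text \<open>The graph of the Perron vector is cut out of \<open>S \<times> prob_simplex\<close> by a continuous equation,
  so it is closed, and a map into a compact set with closed graph is continuous.\<close>
lemma continuous_on_perron_vec:
  fixes A :: "real \<Rightarrow> real^'n^'n"
  assumes cont: "continuous_on S A" and pf: "\<And>t. t \<in> S \<Longrightarrow> perron_frobenius (A t)"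
  shows "continuous_on S (\<lambda>t. perron_vec (A t))"
proof -
  define g where "g p = A (fst p) *v snd p - (\<Sum>k\<in>UNIV. (A (fst p) *v snd p) $ k) *\<^sub>R snd p"
    for p :: "real \<times> (real^'n)"
  have graph: "(\<lambda>t. (t, perron_vec (A t))) ` S = {p \<in> S \<times> prob_simplex. g p = 0}"
  proof safe
    fix t
    assume "t \<in> S"
    then interpret perron_frobenius "A t"
      by (rule pf)
    show "perron_vec (A t) \<in> prob_simplex"
      by (rule perron_vec_in_prob_simplex)
    have "(\<Sum>k\<in>UNIV. (A t *v perron_vec (A t)) $ k) = spectral_radius_mat (A t)"
      by (rule eigenvalue_eq_sum_if_prob_simplex[OF perron_vec_in_prob_simplex perron_vec_eigen])
    then show "g (t, perron_vec (A t)) = 0"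
      unfolding g_def fst_conv snd_conv by (simp add: perron_vec_eigen)
  next
    fix t u
    assume t: "t \<in> S" and u: "u \<in> prob_simplex" and "g (t, u) = 0"
    then have "A t *v u = (\<Sum>k\<in>UNIV. (A t *v u) $ k) *\<^sub>R u"
      by (simp add: g_def)
    then have "perron_vec (A t) = u"
      by (rule perron_frobenius.perron_vec_eqI[OF pf[OF t] u])
    with t show "(t, u) \<in> (\<lambda>t. (t, perron_vec (A t))) ` S"
      by blast
  qed
  have "continuous_on (S \<times> prob_simplex) (\<lambda>p. A (fst p))"
    by (rule continuous_on_compose2[OF cont continuous_on_fst]) auto
  then have "continuous_on (S \<times> prob_simplex) g"
    unfolding g_def matrix_vector_mult_def by (intro continuous_intros)
  then have "closedin (top_of_set (S \<times> prob_simplex)) ((\<lambda>t. (t, perron_vec (A t))) ` S)"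
    unfolding graph by (rule continuous_closedin_preimage_constant)
  moreover have "(\<lambda>t. perron_vec (A t)) \<in> S \<rightarrow> prob_simplex"
    using perron_frobenius.perron_vec_in_prob_simplex[OF pf] by blast
  ultimately show ?thesis
    using continuous_closed_graph_eq[OF compact_prob_simplex] by blast
qed

section \<open>Limits of functions with finite level sets\<close>

lemma eventually_at_right_0_one_side:
  fixes f :: "real \<Rightarrow> real"
  assumes cont: "continuous_on {0<..} f" and fin: "finite {t. 0 < t \<and> f t = c}"
  shows "eventually (\<lambda>t. f t < c) (at_right 0) \<or> eventually (\<lambda>t. c < f t) (at_right 0)"
proof -
  define d where "d = Min (insert 1 {t. 0 < t \<and> f t = c})"
  have "0 < d"
    unfolding d_def using fin by auto
  have ne: "f t \<noteq> c" if "0 < t" "t < d" for t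
    using that fin by (auto simp: d_def)
  have "(\<forall>t. 0 < t \<and> t < d \<longrightarrow> f t < c) \<or> (\<forall>t. 0 < t \<and> t < d \<longrightarrow> c < f t)"
  proof (rule ccontr)
    assume "\<not> ?thesis"
    then obtain a b where a: "0 < a" "a < d" "c < f a" and b: "0 < b" "b < d" "f b < c"
      using ne by (meson linorder_neqE_linordered_idom)
    have "continuous_on {min a b..max a b} f"
      by (rule continuous_on_subset[OF cont]) (use a b in auto)
    then obtain x where "min a b \<le> x" "x \<le> max a b" "f x = c"
      using IVT'[of f "min a b" c "max a b"] IVT2'[of f "max a b" c "min a b"] a b
      by (cases "a \<le> b") (auto simp: min_def max_def)
    with a b ne show False
      by (smt (verit))
  qed
  then show ?thesis
    unfolding eventually_at_right_field using \<open>0 < d\<close> by blast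
qed

text \<open>The limit is the infimum of the admissible levels that \<open>f\<close> eventually stays below: by
  the previous lemma, \<open>f\<close> eventually stays above every admissible level below it.\<close>
lemma tendsto_at_right_0_if_finite_level_sets:
  fixes f :: "real \<Rightarrow> real"
  assumes cont: "continuous_on {0<..} f" and bounded: "\<And>t. 0 < t \<Longrightarrow> \<bar>f t\<bar> \<le> C"
    and "finite B" and levels: "\<And>c. c \<notin> B \<Longrightarrow> finite {t. 0 < t \<and> f t = c}"
  shows "\<exists>L. (f \<longlongrightarrow> L) (at_right 0)"
proof -
  define S where "S = {c. c \<notin> B \<and> eventually (\<lambda>t. f t < c) (at_right 0)}"
  define c0 where "c0 = Max (insert C B) + 1"
  have "C \<le> Max (insert C B)" "\<And>c. c \<in> B \<Longrightarrow> c \<le> Max (insert C B)"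
    using \<open>finite B\<close> by simp_all
  then have "c0 \<notin> B" "C < c0"
    by (force simp: c0_def)+
  then have "c0 \<in> S"
    unfolding S_def eventually_at_right_field using bounded
    by (auto intro!: exI[of _ 1] elim!: le_less_trans[rotated] simp: abs_le_iff)
  then have "S \<noteq> {}"
    by blast
  have "bdd_below S"
  proof (rule bdd_belowI)
    fix c
    assume "c \<in> S"
    then have "eventually (\<lambda>t. f t < c \<and> 0 < t) (at_right 0)"
      by (auto simp: S_def eventually_at_right_less intro: eventually_conj)
    then obtain t where "f t < c" "0 < t"
      using eventually_happens trivial_limit_at_right_real by blast
    then show "- C \<le> c"
      using bounded[of t] by (simp add: abs_le_iff)
  qed
  have "(f \<longlongrightarrow> Inf S) (at_right 0)"
  proof (rule order_tendstoI)
    fix a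
    assume "Inf S < a"
    then obtain c where "c \<in> S" "c < a"
      using cInf_lessD[OF \<open>S \<noteq> {}\<close>] by blast
    then show "eventually (\<lambda>t. f t < a) (at_right 0)"
      by (auto simp: S_def elim: eventually_mono)
  next
    fix a
    assume "a < Inf S"
    then have "infinite ({a<..<Inf S} - B)"
      using \<open>finite B\<close> by (simp add: Diff_infinite_finite)
    then obtain c where c: "a < c" "c < Inf S" "c \<notin> B"
      by (metis Diff_iff finite.emptyI ex_in_conv greaterThanLessThan_iff)
    then have "c \<notin> S"
      using cInf_lower[OF _ \<open>bdd_below S\<close>] by force
    then have "\<not> eventually (\<lambda>t. f t < c) (at_right 0)"
      using c by (simp add: S_def)
    then have "eventually (\<lambda>t. c < f t) (at_right 0)"
      using eventually_at_right_0_one_side[OF cont levels[OF c(3)]] by blast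
    then show "eventually (\<lambda>t. a < f t) (at_right 0)"
      using c by (auto elim: eventually_mono)
  qed
  then show ?thesis
    by blast
qed

section \<open>Bivariate polynomials\<close>

lemma combination_of_least_degree_pseudo_divides:
  fixes Q F G :: "'a::idom poly"
  assumes G: "G = a * Q + b * F" "G \<noteq> 0"
    and least: "\<And>a b. a * Q + b * F \<noteq> 0 \<Longrightarrow> degree G \<le> degree (a * Q + b * F)"
  shows "\<exists>e. G dvd smult (lead_coeff G ^ e) (c * Q + d * F)"
proof -
  define H where "H = c * Q + d * F"
  define g where "g = lead_coeff G ^ (Suc (degree H) - degree G)"
  obtain q r where qr: "pseudo_divmod H G = (q, r)"
    by (metis surj_pair)
  have H: "smult g H = G * q + r" and r: "r = 0 \<or> degree r < degree G"
    using pseudo_divmod[OF G(2) qr] by (simp_all add: g_def)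
  have "r = smult g H - G * q"
    using H by simp
  also have "\<dots> = (smult g c - a * q) * Q + (smult g d - b * q) * F"
    by (simp add: G(1) H_def algebra_simps smult_add_right)
  finally have "r = (smult g c - a * q) * Q + (smult g d - b * q) * F" .
  then have "r = 0"
    using r least by fastforce
  with H have "smult g H = G * q"
    by simp
  then show ?thesis
    unfolding g_def H_def by (metis dvd_triv_left)
qed

text \<open>The combinations \<open>a Q + b F\<close> form an ideal; one of least degree is, up to a constant
  factor, a divisor of \<open>Q\<close> and of \<open>F\<close>, which forces it to be constant since \<open>Q\<close> is prime.\<close>
lemma least_degree_combination_const:
  fixes Q F G :: "'a::idom poly"
  assumes prime: "prime_elem Q" and "degree Q \<noteq> 0" and "\<not> Q dvd F"
    and G: "G = a * Q + b * F" "G \<noteq> 0"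
    and least: "\<And>a b. a * Q + b * F \<noteq> 0 \<Longrightarrow> degree G \<le> degree (a * Q + b * F)"
  shows "degree G = 0"
proof -
  have "Q \<noteq> 0"
    using prime by (simp add: prime_elem_def)
  have pseudo_dvd: "\<exists>e. G dvd smult (lead_coeff G ^ e) (c * Q + d * F)" for c d
    using combination_of_least_degree_pseudo_divides[OF G least] by blast
  obtain e1 where "G dvd smult (lead_coeff G ^ e1) Q"
    using pseudo_dvd[of 1 0] by auto
  then obtain s where s: "smult (lead_coeff G ^ e1) Q = G * s"
    by blast
  then have "Q dvd G * s"
    by (metis dvd_refl dvd_smult)
  then consider "Q dvd s" | "Q dvd G"
    using prime by (auto simp: prime_elem_dvd_mult_iff)
  then show ?thesis
  proof cases
    case 1
    then obtain s' where "s = Q * s'"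
      by blast
    with s have "[:lead_coeff G ^ e1:] * Q = (G * s') * Q"
      by (simp add: mult_ac)
    then have "[:lead_coeff G ^ e1:] = G * s'"
      using \<open>Q \<noteq> 0\<close> mult_cancel_right by blast
    moreover have "lead_coeff G ^ e1 \<noteq> 0"
      using G(2) by simp
    ultimately have "G * s' \<noteq> 0" "degree (G * s') = 0"
      by (metis pCons_eq_0_iff, metis degree_pCons_0)
    then show ?thesis
      by (simp add: degree_mult_eq)
  next
    case 2
    obtain e2 where "G dvd smult (lead_coeff G ^ e2) F"
      using pseudo_dvd[of 0 1] by auto
    with 2 have "Q dvd [:lead_coeff G ^ e2:] * F"
      by (simp add: dvd_trans)
    then have "Q dvd [:lead_coeff G ^ e2:]"
      using prime prime_elem_dvd_mult_iff \<open>\<not> Q dvd F\<close> by blast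
    moreover have "lead_coeff G ^ e2 \<noteq> 0"
      using G(2) by simp
    ultimately have "degree Q \<le> degree [:lead_coeff G ^ e2:]"
      by (intro dvd_imp_degree_le) auto
    with \<open>degree Q \<noteq> 0\<close> show ?thesis
      by simp
  qed
qed

lemma prime_elem_not_dvd_imp_const_combination:
  fixes Q F :: "'a::idom poly"
  assumes prime: "prime_elem Q" and "degree Q \<noteq> 0" and "\<not> Q dvd F"
  shows "\<exists>a b r. r \<noteq> 0 \<and> a * Q + b * F = [:r:]"
proof -
  have "\<exists>a b. Q = a * Q + b * F \<and> Q \<noteq> 0"
    using prime by (intro exI[of _ 1] exI[of _ 0]) (simp add: prime_elem_def)
  then obtain G a b where G: "G = a * Q + b * F" "G \<noteq> 0"
    and least: "\<And>H. (\<exists>a b. H = a * Q + b * F \<and> H \<noteq> 0) \<Longrightarrow> degree G \<le> degree H"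
    using ex_has_least_nat[of "\<lambda>H. \<exists>a b. H = a * Q + b * F \<and> H \<noteq> 0" Q degree] by blast
  have "degree G \<le> degree (c * Q + d * F)" if "c * Q + d * F \<noteq> 0" for c d
    using least that by blast
  then have "degree G = 0"
    by (rule least_degree_combination_const[OF assms G])
  then obtain r where "G = [:r:]"
    by (rule degree_eq_zeroE)
  with G show ?thesis
    by (intro exI[of _ a] exI[of _ b] exI[of _ r]) auto
qed

text \<open>A bivariate polynomial is an element of \<open>R[t][x]\<close>: its coefficients are polynomials in \<open>t\<close>.\<close>
definition poly2 :: "'a::comm_ring_1 poly poly \<Rightarrow> 'a \<Rightarrow> 'a \<Rightarrow> 'a" where
  "poly2 p t x = poly (poly p [:x:]) t"

lemma poly2_simps [simp]:
  "poly2 (p + q) t x = poly2 p t x + poly2 q t x"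
  "poly2 (p - q) t x = poly2 p t x - poly2 q t x"
  "poly2 (p * q) t x = poly2 p t x * poly2 q t x"
  "poly2 0 t x = 0"
  "poly2 1 t x = 1"
  "poly2 [:c:] t x = poly c t"
  "poly2 [:0, 1:] t x = x"
  by (simp_all add: poly2_def)

lemma poly2_prod_mset: "poly2 (prod_mset M) t x = (\<Prod>q\<in>#M. poly2 q t x)"
  by (induction M) simp_all

lemma poly2_det: "poly2 (det X) t x = det (\<chi> i j. poly2 (X $ i $ j) t x)"
  by (rule det_map_hom[symmetric]) simp_all

lemma poly2_prime_factor_root:
  fixes P :: "'a::{field, factorial_ring_gcd, semiring_gcd_mult_normalize} poly poly"
  assumes "P \<noteq> 0" "poly2 P t x = 0"
  shows "\<exists>Q\<in>#prime_factorization P. poly2 Q t x = 0"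
proof -
  have "P dvd prod_mset (prime_factorization P)"
    using prod_mset_prime_factorization_weak[OF \<open>P \<noteq> 0\<close>] by (metis dvd_normalize_iff dvd_refl)
  then have "poly2 (prod_mset (prime_factorization P)) t x = 0"
    using assms(2) by auto
  then show ?thesis
    by (fastforce simp: poly2_prod_mset)
qed

lemma finite_common_roots_poly2:
  fixes Q G :: "'a::idom poly poly"
  assumes prime: "prime_elem Q" and "\<not> Q dvd G"
  shows "finite {t. \<exists>x. poly2 Q t x = 0 \<and> poly2 G t x = 0}"
proof (cases "degree Q = 0")
  case True
  then obtain q where "Q = [:q:]"
    by (rule degree_eq_zeroE)
  moreover have "q \<noteq> 0"
    using prime calculation by (auto simp: prime_elem_def)
  ultimately show ?thesis
    by (auto intro: finite_subset[OF _ poly_roots_finite[of q]])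
next
  case False
  then obtain a b r where "r \<noteq> 0" "a * Q + b * G = [:r:]"
    using prime_elem_not_dvd_imp_const_combination[OF prime _ \<open>\<not> Q dvd G\<close>] by blast
  have "poly r t = 0" if "poly2 Q t x = 0" "poly2 G t x = 0" for t x
  proof -
    have "poly r t = poly2 (a * Q + b * G) t x"
      by (simp only: \<open>a * Q + b * G = [:r:]\<close> poly2_simps)
    with that show ?thesis
      by simp
  qed
  then show ?thesis
    by (auto intro: finite_subset[OF _ poly_roots_finite[OF \<open>r \<noteq> 0\<close>]])
qed

text \<open>If \<open>\<rho>\<close> is a root of \<open>P(t, \<cdot>)\<close> and the level sets of \<open>f\<close> are cut out by polynomials \<open>F c\<close>, then
  only finitely many levels have infinite level sets: a common prime factor of \<open>P\<close> and
  \<open>F c\<close> that vanishes at some \<open>(t, \<rho> t)\<close> pins \<open>c\<close> down to \<open>f t\<close>, and every other factor has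
  only finitely many common roots with \<open>F c\<close>.\<close>
lemma finite_level_sets_if_algebraic:
  fixes P :: "'a::{field, factorial_ring_gcd, semiring_gcd_mult_normalize} poly poly"
    and F :: "'c \<Rightarrow> 'a poly poly"
  assumes "P \<noteq> 0" and root: "\<And>t. t \<in> S \<Longrightarrow> poly2 P t (\<rho> t) = 0"
    and level: "\<And>t c. t \<in> S \<Longrightarrow> poly2 (F c) t (\<rho> t) = 0 \<longleftrightarrow> f t = c"
  shows "\<exists>B. finite B \<and> (\<forall>c. c \<notin> B \<longrightarrow> finite {t \<in> S. f t = c})"
proof -
  define PS where "PS = prime_factorization P"
  have factor_root: "\<exists>Q\<in>#PS. poly2 Q t (\<rho> t) = 0" if "t \<in> S" for t
    unfolding PS_def using \<open>P \<noteq> 0\<close> root[OF that] by (rule poly2_prime_factor_root)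
  define root_of where "root_of Q = (SOME t. t \<in> S \<and> poly2 Q t (\<rho> t) = 0)" for Q
  define B where "B = (\<lambda>Q. f (root_of Q)) ` set_mset PS"
  have "finite {t \<in> S. f t = c}" if "c \<notin> B" for c
  proof -
    have levels_subset: "{t \<in> S. f t = c} \<subseteq>
      (\<Union>Q\<in>{Q \<in> set_mset PS. \<not> Q dvd F c}. {t. \<exists>x. poly2 Q t x = 0 \<and> poly2 (F c) t x = 0})"
    proof
      fix t
      assume "t \<in> {t \<in> S. f t = c}"
      then have "t \<in> S" "f t = c"
        by auto
      then obtain Q where Q: "Q \<in># PS" "poly2 Q t (\<rho> t) = 0"
        using factor_root by blast
      have root_of_Q: "root_of Q \<in> S \<and> poly2 Q (root_of Q) (\<rho> (root_of Q)) = 0"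
        unfolding root_of_def by (rule someI[where x = t]) (use Q(2) \<open>t \<in> S\<close> in simp)
      have "\<not> Q dvd F c"
      proof
        assume "Q dvd F c"
        then have "poly2 (F c) (root_of Q) (\<rho> (root_of Q)) = 0"
          using root_of_Q by auto
        then have "c = f (root_of Q)"
          using level root_of_Q by simp
        with Q(1) \<open>c \<notin> B\<close> show False
          by (simp add: B_def)
      qed
      moreover have "poly2 (F c) t (\<rho> t) = 0"
        using level \<open>t \<in> S\<close> \<open>f t = c\<close> by simp
      ultimately show "t \<in> (\<Union>Q\<in>{Q \<in> set_mset PS. \<not> Q dvd F c}.
          {t. \<exists>x. poly2 Q t x = 0 \<and> poly2 (F c) t x = 0})"
        using Q by blast
    qed
    have "prime_elem Q" if "Q \<in># PS" for Q
      using that unfolding PS_def by (intro prime_imp_prime_elem in_prime_factors_imp_prime)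
    then show ?thesis
      by (intro finite_subset[OF levels_subset]) (auto intro: finite_common_roots_poly2)
  qed
  moreover have "finite B"
    by (simp add: B_def)
  ultimately show ?thesis
    by blast
qed

section \<open>Matrices with polynomial entries\<close>

definition poly_mat :: "'a::comm_ring_1 poly^'n^'m \<Rightarrow> 'a \<Rightarrow> 'a^'n^'m" where
  "poly_mat P t = (\<chi> i j. poly (P $ i $ j) t)"

lemma poly_mat_simps [simp]:
  "poly_mat P t $ i $ j = poly (P $ i $ j) t"
  "poly_mat (P + Q) t = poly_mat P t + poly_mat Q t"
  "poly_mat (P ** R) t = poly_mat P t ** poly_mat R t"
  "poly_mat (mat c) t = mat (poly c t)"
  "poly_mat (\<chi> i j. [:A $ i $ j:]) t = A"
  by (simp_all add: poly_mat_def vec_eq_iff matrix_matrix_mult_def poly_sum mat_def)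

lemma continuous_on_poly_mat: "continuous_on S (poly_mat (P :: real poly^'n^'m))"
  unfolding poly_mat_def by (intro continuous_intros)

lemma perron_vec_poly_mat_finite_level_sets:
  fixes P :: "real poly^'n^'n"
  assumes pf: "\<And>t. t \<in> S \<Longrightarrow> perron_frobenius (poly_mat P t)"
  shows "\<exists>B. finite B \<and> (\<forall>c. c \<notin> B \<longrightarrow> finite {t \<in> S. perron_vec (poly_mat P t) $ k = c})"
proof (cases "S = {}")
  case False
  then obtain t0 where "t0 \<in> S"
    by blast
  define X :: "real poly poly^'n^'n" where "X = mat [:0, 1:] - (\<chi> i j. [:P $ i $ j:])"
  define e :: "real \<Rightarrow> real^'n" where "e c = axis k 1 - (\<chi> j. c)" for c
  define F where "F c = det (X + (\<chi> i j. [:[:e c $ j:]:]))" for c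
  define \<rho> where "\<rho> t = spectral_radius_mat (poly_mat P t)" for t
  have poly2_X: "(\<chi> i j. poly2 (X $ i $ j) t x) = mat x - poly_mat P t" for t x
    by (simp add: X_def mat_def vec_eq_iff cong: if_cong)
  have poly2_det_X: "poly2 (det X) t x = det (mat x - poly_mat P t)" for t x
    by (simp add: poly2_det poly2_X)
  have "(\<chi> i j. poly2 ((X + (\<chi> i j. [:[:e c $ j:]:])) $ i $ j) t x) = mat x - poly_mat P t + (\<chi> i. e c)"
    for c t x
    using poly2_X[of t x] by (simp add: vec_eq_iff)
  then have poly2_F: "poly2 (F c) t x = det (mat x - poly_mat P t + (\<chi> i. e c))" for c t x
    by (simp add: F_def poly2_det)
  have "poly2 (det X) t0 (\<rho> t0 + 1) \<noteq> 0"
    unfolding poly2_det_X \<rho>_def by (rule perron_frobenius.det_shift_nonzero[OF pf[OF \<open>t0 \<in> S\<close>]]) simp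
  then have "det X \<noteq> 0"
    by auto
  moreover have "poly2 (det X) t (\<rho> t) = 0" if "t \<in> S" for t
    unfolding poly2_det_X \<rho>_def by (rule perron_frobenius.det_spectral_radius_shift[OF pf[OF that]])
  moreover have "poly2 (F c) t (\<rho> t) = 0 \<longleftrightarrow> perron_vec (poly_mat P t) $ k = c" if "t \<in> S" for t c
  proof -
    interpret perron_frobenius "poly_mat P t"
      using pf[OF that] .
    let ?v = "perron_vec (poly_mat P t)"
    have "inner (e c) ?v = inner (axis k 1) ?v - inner (\<chi> j. c) ?v"
      by (simp add: e_def inner_diff_left)
    also have "\<dots> = ?v $ k - c * (\<Sum>j\<in>UNIV. ?v $ j)"
      by (simp add: inner_axis') (simp add: inner_vec_def sum_distrib_left)
    finally have "inner (e c) ?v = ?v $ k - c"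
      using perron_vec_in_prob_simplex by (simp add: prob_simplex_def)
    then show ?thesis
      by (simp add: poly2_F \<rho>_def det_rank_one_update_eq_0_iff)
  qed
  ultimately show ?thesis
    by (rule finite_level_sets_if_algebraic)
qed auto

lemma perron_vec_poly_mat_tendsto_at_right_0:
  fixes P :: "real poly^'n^'n"
  assumes pf: "\<And>\<tau>. 0 < \<tau> \<Longrightarrow> perron_frobenius (poly_mat P \<tau>)"
  shows "\<exists>L. ((\<lambda>\<tau>. perron_vec (poly_mat P \<tau>)) \<longlongrightarrow> L) (at_right 0)"
proof -
  let ?v = "\<lambda>\<tau>. perron_vec (poly_mat P \<tau>)"
  have "continuous_on {0<..} ?v"
    by (rule continuous_on_perron_vec[OF continuous_on_poly_mat]) (simp add: pf)
  have "\<exists>L. ((\<lambda>\<tau>. ?v \<tau> $ k) \<longlongrightarrow> L) (at_right 0)" for k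
  proof -
    obtain B where B: "finite B" "\<And>c. c \<notin> B \<Longrightarrow> finite {\<tau> \<in> {0<..}. ?v \<tau> $ k = c}"
      using perron_vec_poly_mat_finite_level_sets[of "{0<..}" P k] pf by auto
    show ?thesis
    proof (rule tendsto_at_right_0_if_finite_level_sets[where C = 1 and B = B])
      show "continuous_on {0<..} (\<lambda>\<tau>. ?v \<tau> $ k)"
        using \<open>continuous_on {0<..} ?v\<close> by (rule continuous_on_component)
      show "\<bar>?v \<tau> $ k\<bar> \<le> 1" if "0 < \<tau>" for \<tau>
        using perron_frobenius.perron_vec_in_prob_simplex[OF pf[OF that]]
        by (rule prob_simplex_abs_component_le_1)
      show "finite {\<tau>. 0 < \<tau> \<and> ?v \<tau> $ k = c}" if "c \<notin> B" for c
        using B(2)[OF that] by simp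
    qed (rule B(1))
  qed
  then obtain L where "\<And>k. ((\<lambda>\<tau>. ?v \<tau> $ k) \<longlongrightarrow> L k) (at_right 0)"
    by metis
  then have "(?v \<longlongrightarrow> (\<chi> k. L k)) (at_right 0)"
    by (auto intro: vec_tendstoI)
  then show ?thesis
    by blast
qed

lemma scaleR_mat_1: "c *\<^sub>R mat 1 = (mat c :: real^'n^'n)"
  by (simp add: vec_eq_iff mat_def)

definition shifted_prod_poly :: "(nat \<Rightarrow> real^'n^'n) \<Rightarrow> nat \<Rightarrow> real poly^'n^'n" where
  "shifted_prod_poly M K = foldr (\<lambda>k P. ((\<chi> i j. [:M k $ i $ j:]) + mat [:0, 1:]) ** P) [0..<K] (mat 1)"

lemma shifted_prod_eq_poly_mat: "shifted_prod M K = poly_mat (shifted_prod_poly M K)"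
proof -
  have "foldr (\<lambda>k P. (M k + \<tau> *\<^sub>R mat 1) ** P) ks (mat 1) =
    poly_mat (foldr (\<lambda>k P. ((\<chi> i j. [:M k $ i $ j:]) + mat [:0, 1:]) ** P) ks (mat 1)) \<tau>" for ks \<tau>
    by (induction ks) (simp_all add: scaleR_mat_1)
  then show ?thesis
    by (simp add: fun_eq_iff shifted_prod_def shifted_prod_poly_def)
qed

lemma nonneg_mat_mult_diag:
  fixes X Y :: "real^'n^'n"
  assumes "nonneg_mat X" "nonneg_mat Y"
  shows "nonneg_mat (X ** Y)" "X $ i $ i * Y $ i $ i \<le> (X ** Y) $ i $ i"
  using assms unfolding nonneg_mat_def matrix_matrix_mult_def
  by (auto intro!: sum_nonneg member_le_sum[where f = "\<lambda>k. X $ i $ k * Y $ k $ i"])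

lemma shifted_prod_diag_ge:
  assumes "\<And>k. k < K \<Longrightarrow> nonneg_mat (M k)" "0 \<le> \<tau>"
  shows "\<tau> ^ K \<le> shifted_prod M K \<tau> $ i $ i"
proof -
  have prod_props: "nonneg_mat (foldr (\<lambda>k P. (M k + \<tau> *\<^sub>R mat 1) ** P) ks (mat 1)) \<and>
    (\<forall>i. \<tau> ^ length ks \<le> foldr (\<lambda>k P. (M k + \<tau> *\<^sub>R mat 1) ** P) ks (mat 1) $ i $ i)"
    if "set ks \<subseteq> {..<K}" for ks
    using that
  proof (induction ks)
    case Nil
    then show ?case
      by (simp add: nonneg_mat_def mat_def)
  next
    case (Cons k ks)
    let ?X = "M k + \<tau> *\<^sub>R mat 1" and ?P = "foldr (\<lambda>k P. (M k + \<tau> *\<^sub>R mat 1) ** P) ks (mat 1)"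
    have "nonneg_mat ?X" "\<And>i. \<tau> \<le> ?X $ i $ i"
      using assms Cons.prems by (auto simp: nonneg_mat_def mat_def)
    moreover have "nonneg_mat ?P" "\<And>i. \<tau> ^ length ks \<le> ?P $ i $ i"
      using Cons by auto
    ultimately show ?case
      using nonneg_mat_mult_diag[of ?X ?P] assms(2)
      by (fastforce intro: order_trans[OF mult_mono])
  qed
  have "set [0..<K] \<subseteq> {..<K}"
    by auto
  from prod_props[OF this] show ?thesis
    by (simp add: shifted_prod_def)
qed

theorem mainTheorem1:
  fixes M :: "nat \<Rightarrow> real^'n^'n" and K :: nat
  assumes "K \<ge> 1"
    and "\<And>k. k < K \<Longrightarrow> nonneg_mat (M k)"
    and "\<And>\<tau>. \<tau> > 0 \<Longrightarrow> irreducible_mat (shifted_prod M K \<tau>) \<and> aperiodic_mat (shifted_prod M K \<tau>)"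
  shows "\<exists>L. ((\<lambda>\<tau>. perron_vec (shifted_prod M K \<tau>)) \<longlongrightarrow> L) (at_right 0)"
proof -
  have A: "shifted_prod M K = poly_mat (shifted_prod_poly M K)"
    by (rule shifted_prod_eq_poly_mat)
  have "perron_frobenius (shifted_prod M K \<tau>)" if "0 < \<tau>" for \<tau>
  proof
    show "irreducible_mat (shifted_prod M K \<tau>)"
      using assms(3)[OF that] by simp
    show "0 < shifted_prod M K \<tau> $ i $ i" for i
      using shifted_prod_diag_ge[of K M \<tau> i] assms(2) that
      by (simp add: less_le_trans[OF zero_less_power[OF that]])
  qed
  then show ?thesis
    using perron_vec_poly_mat_tendsto_at_right_0[of "shifted_prod_poly M K"] by (simp add: A)
qed

end
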